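(* Let $G_1$ and $G_2$ be graphs on $n$ nodes with Laplacian matrices $Q_1,Q_2$, and for $p\ge0$ let $$Q(p)=\begin{bmatrix} Q_1+pnI & -pJ\\ -pJ & Q_2+pnI\end{bmatrix},$$ where $J$ is the $n\times n$ all-one matrix (an $n$-to-$n$ interconnection), with eigenvalues $0=\mu_N(p)\le\mu_{N-1}(p)\le\dots\le\mu_1(p)$, $N=2n$. Define $p^*=\sup\big(\{0\}\cup\{p>0:\ \mu_{N-1}(p)=2np\}\big)$. Then $$p^*=\min\left\{\frac{\mu_{n-1}(Q_1)}{n},\ \frac{\mu_{n-1}(Q_2)}{n}\right\},$$ where $\mu_{n-1}(Q_i)$ is the second smallest eigenvalue of $Q_i$.
   Context: $2np$ is an eigenvalue of $Q(p)$ with eigenvector $[u^T,-u^T]^T$, $u$ the all-one vector; $p^*$ is the structural transition threshold, described in the paper as the coupling beyond which the algebraic connectivity $\mu_{N-1}$ no longer equals $2np$ (formalized here as the supremum). *)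

theory Defs
  imports "Jordan_Normal_Form.Char_Poly" "HOL-Computational_Algebra.Polynomial"
begin

text \<open>A simple undirected graph on the vertex set {0..<n}: a symmetric, irreflexive
  adjacency relation (only its restriction to {0..<n} matters).\<close>
definition simple_graph :: "nat \<Rightarrow> (nat \<Rightarrow> nat \<Rightarrow> bool) \<Rightarrow> bool" where
  "simple_graph n E \<longleftrightarrow> (\<forall>i<n. \<forall>j<n. E i j \<longleftrightarrow> E j i) \<and> (\<forall>i<n. \<not> E i i)"

definition laplacian :: "nat \<Rightarrow> (nat \<Rightarrow> nat \<Rightarrow> bool) \<Rightarrow> real mat" where
  "laplacian n E = mat n n (\<lambda>(i,j). if i = j then real (card {k. k < n \<and> E i k})
                                     else if E i j then -1 else 0)"

definition ones_mat :: "nat \<Rightarrow> real mat" where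
  "ones_mat n = mat n n (\<lambda>_. 1)"

definition coupled_mat :: "nat \<Rightarrow> real mat \<Rightarrow> real mat \<Rightarrow> real \<Rightarrow> real mat" where
  "coupled_mat n Q1 Q2 p =
     four_block_mat (Q1 + (p * real n) \<cdot>\<^sub>m 1\<^sub>m n) ((- p) \<cdot>\<^sub>m ones_mat n)
                    ((- p) \<cdot>\<^sub>m ones_mat n) (Q2 + (p * real n) \<cdot>\<^sub>m 1\<^sub>m n)"

definition sorted_eigs :: "real mat \<Rightarrow> real list" where
  "sorted_eigs A = sorted_list_of_multiset (proots (char_poly A))"

definition second_smallest_eig :: "real mat \<Rightarrow> real" where
  "second_smallest_eig A = sorted_eigs A ! 1"

definition p_star :: "nat \<Rightarrow> real mat \<Rightarrow> real mat \<Rightarrow> real" where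
  "p_star n Q1 Q2 = Sup ({0} \<union> {p. p > 0 \<and> second_smallest_eig (coupled_mat n Q1 Q2 p) = 2 * real n * p})"

end

theory Submission
  imports Defs
begin

(* Write the characteristic polynomial of Q_i as x r_i(x) and put c = p n. The blocks of
  k I - Q(p) commute with the all-one matrix J because Q_i J = J Q_i = 0, so the block
  determinant formula and det (I - t J) = 1 - t n give

    det (k I - Q(p)) = k (k - 2c) r_1(k - c) r_2(k - c).

  Thus, apart from 0, the spectrum of Q(p) is 2c together with the roots of r_1 and r_2
  shifted by c, so mu_(N-1)(p) = min (2np, mu_(n-1)(Q_1) + np, mu_(n-1)(Q_2) + np), which
  equals 2np exactly when np <= mu_(n-1)(Q_i) for i = 1, 2. Since the eigenvalue list only records real roots,
  this needs that the Laplacians, being symmetric, have real spectrum, and (Gershgorin) that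
  it is nonnegative. *)

lemma smult_smult_mat: "a \<cdot>\<^sub>m (b \<cdot>\<^sub>m A) = (a * b :: 'a :: semigroup_mult) \<cdot>\<^sub>m A"
  by (rule eq_matI) (auto simp: mult.assoc)

lemma ones_mat_carrier [simp]: "ones_mat n \<in> carrier_mat n n"
  and dim_row_ones_mat [simp]: "dim_row (ones_mat n) = n"
  and dim_col_ones_mat [simp]: "dim_col (ones_mat n) = n"
  unfolding ones_mat_def by auto

lemma transpose_ones_mat [simp]: "transpose_mat (ones_mat n) = ones_mat n"
  by (intro eq_matI) (auto simp: ones_mat_def)

lemma ones_mat_mult_ones_mat: "ones_mat n * ones_mat n = real n \<cdot>\<^sub>m ones_mat n"
  by (rule eq_matI) (auto simp: ones_mat_def scalar_prod_def)

lemma mult_ones_mat_index: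
  assumes "A \<in> carrier_mat m n" "i < m" "j < n"
  shows "(A * ones_mat n) $$ (i, j) = (\<Sum>k<n. A $$ (i, k))"
  using assms by (simp add: ones_mat_def scalar_prod_def lessThan_atLeast0)

lemma neg_char_matrix_eq: "Q \<in> carrier_mat n n \<Longrightarrow> - char_matrix Q y = y \<cdot>\<^sub>m 1\<^sub>m n - Q"
  by (auto simp: char_matrix_def)

lemma neg_char_matrix_mult_ones_mat:
  fixes Q :: "real mat"
  assumes Q: "Q \<in> carrier_mat n n" and QJ: "Q * ones_mat n = 0\<^sub>m n n"
  shows "- char_matrix Q y * ones_mat n = y \<cdot>\<^sub>m ones_mat n"
proof -
  have "- char_matrix Q y * ones_mat n = (y \<cdot>\<^sub>m 1\<^sub>m n) * ones_mat n - Q * ones_mat n"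
    unfolding neg_char_matrix_eq[OF Q] using Q by (intro minus_mult_distrib_mat[of _ n n _ _ n]) auto
  also have "\<dots> = y \<cdot>\<^sub>m ones_mat n"
    unfolding QJ by (rule eq_matI) (auto simp: mult_smult_assoc_mat[of _ n n _ n])
  finally show ?thesis .
qed

lemma ones_mat_mult_neg_char_matrix:
  fixes Q :: "real mat"
  assumes Q: "Q \<in> carrier_mat n n" and JQ: "ones_mat n * Q = 0\<^sub>m n n"
  shows "ones_mat n * - char_matrix Q y = y \<cdot>\<^sub>m ones_mat n"
proof -
  have "ones_mat n * - char_matrix Q y = ones_mat n * (y \<cdot>\<^sub>m 1\<^sub>m n) - ones_mat n * Q"
    unfolding neg_char_matrix_eq[OF Q] using Q by (intro mult_minus_distrib_mat[of _ n n]) auto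
  also have "\<dots> = y \<cdot>\<^sub>m ones_mat n"
    unfolding JQ by (rule eq_matI) (auto simp: mult_smult_distrib[of _ n n _ n])
  finally show ?thesis .
qed

(* J P = P E for these two matrices, which makes 1 - t J similar to the lower triangular
  1 - t E: the last row of E holds the column sums of P. *)
definition last_col_ones_mat :: "nat \<Rightarrow> real mat" where
  "last_col_ones_mat n = mat n n (\<lambda>(i, j). if j = n - 1 \<or> i = j then 1 else 0)"

definition col_sums_last_row_mat :: "nat \<Rightarrow> real mat" where
  "col_sums_last_row_mat n =
     mat n n (\<lambda>(i, j). if i = n - 1 then (if j = n - 1 then real n else 1) else 0)"

lemma last_col_ones_mat_carrier [simp]: "last_col_ones_mat n \<in> carrier_mat n n"
  and dim_row_last_col_ones_mat [simp]: "dim_row (last_col_ones_mat n) = n"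
  and dim_col_last_col_ones_mat [simp]: "dim_col (last_col_ones_mat n) = n"
  and col_sums_last_row_mat_carrier [simp]: "col_sums_last_row_mat n \<in> carrier_mat n n"
  and dim_row_col_sums_last_row_mat [simp]: "dim_row (col_sums_last_row_mat n) = n"
  and dim_col_col_sums_last_row_mat [simp]: "dim_col (col_sums_last_row_mat n) = n"
  unfolding last_col_ones_mat_def col_sums_last_row_mat_def by auto

lemma det_last_col_ones_mat: "det (last_col_ones_mat n) = 1"
  by (subst det_upper_triangular[of _ n])
    (auto simp: upper_triangular_def last_col_ones_mat_def diag_mat_def intro: prod_list_neutral)

lemma ones_mat_mult_last_col_ones_mat:
  assumes "n > 0"
  shows "ones_mat n * last_col_ones_mat n = last_col_ones_mat n * col_sums_last_row_mat n"
    (is "?J * ?P = ?P * ?E")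
proof (rule eq_matI)
  fix i j assume "i < dim_row (?P * ?E)" "j < dim_col (?P * ?E)"
  then have i: "i < n" and j: "j < n" by auto
  have "(?J * ?P) $$ (i, j) = (\<Sum>k<n. ?P $$ (k, j))"
    using i j by (simp add: ones_mat_def scalar_prod_def lessThan_atLeast0)
  also have "\<dots> = (if j = n - 1 then real n else 1)"
    using j by (simp add: last_col_ones_mat_def)
  also have "\<dots> = (\<Sum>k<n. if k = n - 1 then ?E $$ (n - 1, j) else 0)"
    using j assms by (simp add: col_sums_last_row_mat_def)
  also have "\<dots> = (\<Sum>k<n. ?P $$ (i, k) * ?E $$ (k, j))"
    using i j by (intro sum.cong) (auto simp: last_col_ones_mat_def col_sums_last_row_mat_def)
  also have "\<dots> = (?P * ?E) $$ (i, j)"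
    using i j by (simp add: scalar_prod_def lessThan_atLeast0)
  finally show "(?J * ?P) $$ (i, j) = (?P * ?E) $$ (i, j)" .
qed auto

lemma det_one_minus_smult_col_sums_last_row_mat:
  assumes "n > 0"
  shows "det (1\<^sub>m n - t \<cdot>\<^sub>m col_sums_last_row_mat n) = 1 - t * real n"
proof -
  let ?L = "1\<^sub>m n - t \<cdot>\<^sub>m col_sums_last_row_mat n"
  have L: "?L \<in> carrier_mat n n"
    using col_sums_last_row_mat_carrier by auto
  have "det ?L = prod_list (diag_mat (transpose_mat ?L))"
    by (subst det_transpose[OF L, symmetric], subst det_upper_triangular[of _ n])
      (auto simp: upper_triangular_def col_sums_last_row_mat_def)
  also have "\<dots> = (\<Prod>i<n. transpose_mat ?L $$ (i, i))"
    by (simp add: diag_mat_def prod.distinct_set_conv_list[symmetric] atLeast0LessThan)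
  also have "\<dots> = (\<Prod>i<n. if i = n - 1 then 1 - t * real n else 1)"
    by (intro prod.cong) (auto simp: col_sums_last_row_mat_def)
  also have "\<dots> = 1 - t * real n"
    using assms by simp
  finally show ?thesis .
qed

lemma det_one_minus_smult_ones_mat: "det (1\<^sub>m n - t \<cdot>\<^sub>m ones_mat n) = 1 - t * real n"
proof (cases "n = 0")
  case True
  then show ?thesis by (simp add: det_def)
next
  case False
  let ?J = "ones_mat n" and ?P = "last_col_ones_mat n" and ?E = "col_sums_last_row_mat n"
  have "(1\<^sub>m n - t \<cdot>\<^sub>m ?J) * ?P = ?P - t \<cdot>\<^sub>m (?J * ?P)"
    by (simp add: minus_mult_distrib_mat[of _ n n _ _ n] mult_smult_assoc_mat[of _ n n _ n])
  also have "\<dots> = ?P * (1\<^sub>m n - t \<cdot>\<^sub>m ?E)"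
    using False
    by (simp add: ones_mat_mult_last_col_ones_mat mult_minus_distrib_mat[of _ n n _ n]
        mult_smult_distrib[of _ n n _ n])
  finally have "det ((1\<^sub>m n - t \<cdot>\<^sub>m ?J) * ?P) = det (?P * (1\<^sub>m n - t \<cdot>\<^sub>m ?E))"
    by simp
  moreover have "1\<^sub>m n - t \<cdot>\<^sub>m ?J \<in> carrier_mat n n" "1\<^sub>m n - t \<cdot>\<^sub>m ?E \<in> carrier_mat n n"
    using ones_mat_carrier col_sums_last_row_mat_carrier by auto
  ultimately show ?thesis
    using False by (simp add: det_mult[of _ n] det_last_col_ones_mat
        det_one_minus_smult_col_sums_last_row_mat)
qed

lemma coupled_mat_carrier:
  "Q1 \<in> carrier_mat n n \<Longrightarrow> Q2 \<in> carrier_mat n n \<Longrightarrow> coupled_mat n Q1 Q2 p \<in> carrier_mat (n + n) (n + n)"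
  unfolding coupled_mat_def by auto

lemma neg_char_matrix_coupled_mat:
  fixes Q1 Q2 :: "real mat"
  assumes "Q1 \<in> carrier_mat n n" and "Q2 \<in> carrier_mat n n"
  shows "- char_matrix (coupled_mat n Q1 Q2 p) (y + p * real n) =
    four_block_mat (- char_matrix Q1 y) (p \<cdot>\<^sub>m ones_mat n) (p \<cdot>\<^sub>m ones_mat n) (- char_matrix Q2 y)"
  using assms
  by (intro eq_matI) (auto simp: coupled_mat_def char_matrix_def ones_mat_def algebra_simps)

lemma char_poly_coupled_mat:
  fixes Q1 Q2 :: "real mat"
  assumes Q1: "Q1 \<in> carrier_mat n n" and Q2: "Q2 \<in> carrier_mat n n"
    and Q1J: "Q1 * ones_mat n = 0\<^sub>m n n"
    and Q2J: "Q2 * ones_mat n = 0\<^sub>m n n" and JQ2: "ones_mat n * Q2 = 0\<^sub>m n n"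
    and y: "y \<noteq> 0"
  shows "y\<^sup>2 * poly (char_poly (coupled_mat n Q1 Q2 p)) (y + p * real n) =
    poly (char_poly Q1) y * poly (char_poly Q2) y * (y\<^sup>2 - (p * real n)\<^sup>2)"
proof -
  let ?J = "ones_mat n"
  define A where "A = - char_matrix Q1 y"
  define D where "D = - char_matrix Q2 y"
  define B where "B = p \<cdot>\<^sub>m ?J"
  define t where "t = p\<^sup>2 * real n / y\<^sup>2"
  have A: "A \<in> carrier_mat n n" and D: "D \<in> carrier_mat n n" and B: "B \<in> carrier_mat n n"
    unfolding A_def D_def B_def using Q1 Q2 by auto
  then have AD: "A * D \<in> carrier_mat n n"
    by simp
  have AJ: "A * ?J = y \<cdot>\<^sub>m ?J"
    unfolding A_def by (rule neg_char_matrix_mult_ones_mat[OF Q1 Q1J])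
  have DJ: "D * ?J = y \<cdot>\<^sub>m ?J"
    unfolding D_def by (rule neg_char_matrix_mult_ones_mat[OF Q2 Q2J])
  have JD: "?J * D = y \<cdot>\<^sub>m ?J"
    unfolding D_def by (rule ones_mat_mult_neg_char_matrix[OF Q2 JQ2])
  have BD: "B * D = D * B"
    unfolding B_def using D
    by (simp add: mult_smult_assoc_mat[of _ n n _ n] mult_smult_distrib[of _ n n _ n] JD DJ)
  have BB: "B * B = (p\<^sup>2 * real n) \<cdot>\<^sub>m ?J"
    unfolding B_def
    by (simp add: mult_smult_assoc_mat[of _ n n _ n] mult_smult_distrib[of _ n n _ n]
        ones_mat_mult_ones_mat smult_smult_mat power2_eq_square mult.assoc)
  have "(A * D) * (t \<cdot>\<^sub>m ?J) = (t * y * y) \<cdot>\<^sub>m ?J"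
    using A D
    by (simp add: mult_smult_distrib[of _ n n _ n] assoc_mult_mat[of _ n n _ n _ n] DJ AJ
        smult_smult_mat mult.assoc)
  also have "t * y * y = p\<^sup>2 * real n"
    unfolding t_def using y by (simp add: power2_eq_square)
  finally have factor: "A * D - B * B = (A * D) * (1\<^sub>m n - t \<cdot>\<^sub>m ?J)"
    using AD by (simp add: BB mult_minus_distrib_mat[of _ n n _ n] right_mult_one_mat[OF AD])
  have "poly (char_poly (coupled_mat n Q1 Q2 p)) (y + p * real n) = det (four_block_mat A B B D)"
    unfolding char_poly_matrix[OF coupled_mat_carrier[OF Q1 Q2]]
      neg_char_matrix_coupled_mat[OF Q1 Q2] A_def B_def D_def ..
  also have "\<dots> = det (A * D - B * B)"
    by (rule det_four_block_mat[OF A B B D BD])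
  also have "\<dots> = det A * det D * (1 - t * real n)"
  proof -
    have "1\<^sub>m n - t \<cdot>\<^sub>m ?J \<in> carrier_mat n n"
      by auto
    then show ?thesis
      by (simp add: factor det_mult[OF AD] det_mult[OF A D] det_one_minus_smult_ones_mat)
  qed
  also have "det A = poly (char_poly Q1) y"
    unfolding A_def by (rule char_poly_matrix[OF Q1, symmetric])
  also have "det D = poly (char_poly Q2) y"
    unfolding D_def by (rule char_poly_matrix[OF Q2, symmetric])
  finally show ?thesis
    unfolding t_def using y by (simp add: field_simps power2_eq_square)
qed

lemma laplacian_carrier [simp]: "laplacian n E \<in> carrier_mat n n"
  and dim_row_laplacian [simp]: "dim_row (laplacian n E) = n"
  and dim_col_laplacian [simp]: "dim_col (laplacian n E) = n"
  unfolding laplacian_def by auto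

lemma transpose_laplacian:
  assumes "simple_graph n E"
  shows "transpose_mat (laplacian n E) = laplacian n E"
  using assms by (intro eq_matI) (auto simp: laplacian_def simple_graph_def)

lemma laplacian_row_mult:
  assumes G: "simple_graph n E" and i: "i < n"
  shows "(\<Sum>k<n. laplacian n E $$ (i, k) * f k) =
    real (card {k. k < n \<and> E i k}) * f i - (\<Sum>k | k < n \<and> E i k. f k)"
proof -
  have "\<not> E i i" using G i by (simp add: simple_graph_def)
  then have "(\<Sum>k<n. laplacian n E $$ (i, k) * f k) =
      (\<Sum>k<n. (if k = i then real (card {k. k < n \<and> E i k}) * f i else 0) - (if E i k then f k else 0))"
    using i by (intro sum.cong) (auto simp: laplacian_def)
  also have "\<dots> = real (card {k. k < n \<and> E i k}) * f i - (\<Sum>k | k < n \<and> E i k. f k)"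
    using i by (simp add: sum_subtractf sum.If_cases lessThan_def Int_def conj_commute)
  finally show ?thesis .
qed

lemma laplacian_mult_ones_mat:
  assumes "simple_graph n E"
  shows "laplacian n E * ones_mat n = 0\<^sub>m n n"
  using laplacian_row_mult[OF assms, of _ "\<lambda>_. 1"]
  by (intro eq_matI) (auto simp: mult_ones_mat_index[OF laplacian_carrier] simp del: index_mult_mat(1))

lemma ones_mat_mult_laplacian:
  assumes "simple_graph n E"
  shows "ones_mat n * laplacian n E = 0\<^sub>m n n"
proof -
  have "ones_mat n * laplacian n E = transpose_mat (laplacian n E * ones_mat n)"
    by (simp add: transpose_mult[of _ n n _ n] transpose_laplacian[OF assms])
  then show ?thesis
    by (simp add: laplacian_mult_ones_mat[OF assms])
qed

lemma laplacian_eigenvalue_0: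
  assumes n: "n \<ge> 1" and G: "simple_graph n E"
  shows "eigenvalue (laplacian n E) 0"
proof -
  define u where "u = vec n (\<lambda>_. 1 :: real)"
  have "laplacian n E *\<^sub>v u = 0 \<cdot>\<^sub>v u"
  proof (rule eq_vecI)
    fix i assume "i < dim_vec (0 \<cdot>\<^sub>v u)"
    then have i: "i < n" by (simp add: u_def)
    have "(laplacian n E *\<^sub>v u) $ i = (\<Sum>k<n. laplacian n E $$ (i, k) * 1)"
      using i by (simp add: u_def scalar_prod_def lessThan_atLeast0)
    also have "\<dots> = 0"
      using laplacian_row_mult[OF G i, of "\<lambda>_. 1"] by simp
    finally show "(laplacian n E *\<^sub>v u) $ i = (0 \<cdot>\<^sub>v u) $ i"
      using i by (simp add: u_def)
  qed (simp add: u_def)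
  moreover have "u $ 0 \<noteq> 0\<^sub>v n $ 0"
    using n by (simp add: u_def)
  then have "u \<noteq> 0\<^sub>v n"
    by metis
  ultimately show ?thesis
    unfolding eigenvalue_def eigenvector_def by (intro exI[of _ u]) (simp add: u_def)
qed

lemma laplacian_eigenvalue_nonneg:
  assumes G: "simple_graph n E" and ev: "eigenvalue (laplacian n E) x"
  shows "x \<ge> 0"
proof -
  obtain v where v: "v \<in> carrier_vec n" "v \<noteq> 0\<^sub>v n" "laplacian n E *\<^sub>v v = x \<cdot>\<^sub>v v"
    using ev unfolding eigenvalue_def eigenvector_def by auto
  obtain i where i: "i < n" "v $ i \<noteq> 0"
    using v(1,2) by (metis carrier_vecD eq_vecI index_zero_vec)
  have "finite ((\<lambda>k. \<bar>v $ k\<bar>) ` {..<n})" "(\<lambda>k. \<bar>v $ k\<bar>) ` {..<n} \<noteq> {}"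
    using i by auto
  from Max_in[OF this] obtain m where m: "m < n" "\<bar>v $ m\<bar> = Max ((\<lambda>k. \<bar>v $ k\<bar>) ` {..<n})"
    by auto
  then have max: "\<bar>v $ k\<bar> \<le> \<bar>v $ m\<bar>" if "k < n" for k
    using that by simp
  have "v $ m \<noteq> 0"
    using max[OF i(1)] i(2) by auto
  define N where "N = {k. k < n \<and> E m k}"
  have "(real (card N) - x) * v $ m = (\<Sum>k\<in>N. v $ k)"
    using arg_cong[OF v(3), of "\<lambda>w. w $ m"] laplacian_row_mult[OF G m(1), of "\<lambda>k. v $ k"] m(1) v(1)
    by (simp add: N_def scalar_prod_def lessThan_atLeast0 algebra_simps)
  then have "\<bar>real (card N) - x\<bar> * \<bar>v $ m\<bar> \<le> (\<Sum>k\<in>N. \<bar>v $ k\<bar>)"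
    by (metis abs_mult sum_abs)
  also have "\<dots> \<le> real (card N) * \<bar>v $ m\<bar>"
    using sum_mono[of N "\<lambda>k. \<bar>v $ k\<bar>" "\<lambda>_. \<bar>v $ m\<bar>"] max by (auto simp: N_def)
  finally show ?thesis
    using \<open>v $ m \<noteq> 0\<close> by simp
qed

lemma real_symmetric_mat_eigenvalue_real:
  fixes A :: "real mat"
  assumes A: "A \<in> carrier_mat n n" and sym: "transpose_mat A = A"
    and ev: "eigenvalue (map_mat complex_of_real A) z"
  shows "Im z = 0"
proof -
  let ?A = "map_mat complex_of_real A"
  obtain v where v: "v \<in> carrier_vec n" "v \<noteq> 0\<^sub>v n" "?A *\<^sub>v v = z \<cdot>\<^sub>v v"
    using ev A unfolding eigenvalue_def eigenvector_def by auto
  have sym_entry: "A $$ (j, i) = A $$ (i, j)" if "i < n" "j < n" for i j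
    using arg_cong[OF sym, of "\<lambda>B. B $$ (i, j)"] that A by auto
  have row: "(\<Sum>j<n. complex_of_real (A $$ (i, j)) * v $ j) = z * v $ i" if i: "i < n" for i
    using arg_cong[OF v(3), of "\<lambda>w. w $ i"] i v(1) A
    by (simp add: scalar_prod_def lessThan_atLeast0)
  define S where "S = (\<Sum>i<n. \<Sum>j<n. cnj (v $ i) * complex_of_real (A $$ (i, j)) * v $ j)"
  define s where "s = (\<Sum>i<n. (cmod (v $ i))\<^sup>2)"
  have "S = (\<Sum>i<n. cnj (v $ i) * (\<Sum>j<n. complex_of_real (A $$ (i, j)) * v $ j))"
    unfolding S_def by (simp add: sum_distrib_left mult.assoc)
  also have "\<dots> = (\<Sum>i<n. z * (v $ i * cnj (v $ i)))"
    by (intro sum.cong refl) (simp add: row)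
  also have "\<dots> = (\<Sum>i<n. z * complex_of_real ((cmod (v $ i))\<^sup>2))"
    by (simp only: complex_norm_square)
  finally have S_eq: "S = z * complex_of_real s"
    by (simp add: s_def sum_distrib_left)
  have "cnj S = (\<Sum>i<n. \<Sum>j<n. v $ i * complex_of_real (A $$ (i, j)) * cnj (v $ j))"
    unfolding S_def by simp
  also have "\<dots> = (\<Sum>j<n. \<Sum>i<n. v $ i * complex_of_real (A $$ (i, j)) * cnj (v $ j))"
    by (rule sum.swap)
  also have "\<dots> = S"
    unfolding S_def by (intro sum.cong refl) (simp add: sym_entry mult_ac)
  finally have "Im S = 0"
    by (simp add: complex_eq_iff)
  moreover have "s > 0"
  proof -
    obtain i where i: "i < n" "v $ i \<noteq> 0"
      using v(1,2) by (metis carrier_vecD eq_vecI index_zero_vec)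
    then have "(cmod (v $ i))\<^sup>2 > 0" by simp
    also have "(cmod (v $ i))\<^sup>2 \<le> s"
      unfolding s_def using i by (intro member_le_sum) auto
    finally show ?thesis .
  qed
  ultimately show ?thesis
    unfolding S_eq by simp
qed

lemma real_symmetric_char_poly_factor_has_root:
  fixes A :: "real mat"
  assumes A: "A \<in> carrier_mat n n" and sym: "transpose_mat A = A"
    and fac: "char_poly A = q * r" and deg: "degree r > 0"
  shows "\<exists>x. poly r x = 0"
proof -
  interpret map_poly_comm_ring_hom complex_of_real by unfold_locales
  have "\<not> constant (poly (map_poly complex_of_real r))"
    using deg constant_degree[of "map_poly complex_of_real r"] by simp
  then obtain z where z: "poly (map_poly complex_of_real r) z = 0"
    using fundamental_theorem_of_algebra by blast
  have Ac: "map_mat complex_of_real A \<in> carrier_mat n n"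
    using A by simp
  have "poly (char_poly (map_mat complex_of_real A)) z = 0"
    unfolding of_real_hom.char_poly_hom[OF A] fac hom_mult using z by simp
  then have "Im z = 0"
    using real_symmetric_mat_eigenvalue_real[OF A sym] eigenvalue_root_char_poly[OF Ac] by simp
  then have "complex_of_real (Re z) = z"
    by (simp add: complex_eq_iff)
  have "complex_of_real (poly r (Re z)) = poly (map_poly complex_of_real r) (complex_of_real (Re z))"
    by (rule of_real_hom.poly_map_poly[symmetric])
  also have "\<dots> = 0"
    unfolding \<open>complex_of_real (Re z) = z\<close> by (rule z)
  finally have "poly r (Re z) = 0"
    by simp
  then show ?thesis ..
qed

lemma second_smallest_eig_eqI:
  assumes fac: "char_poly A = [:0, 1:] * r" and r: "r \<noteq> 0"
    and root: "poly r m = 0" and m: "0 \<le> m" and least: "\<And>x. poly r x = 0 \<Longrightarrow> m \<le> x"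
  shows "second_smallest_eig A = m"
proof -
  define L where "L = sorted_list_of_multiset (proots r)"
  have L: "sorted L" "set L = {x. poly r x = 0}"
    using r by (auto simp: L_def)
  then obtain h L' where h: "L = h # L'"
    using root by (cases L) auto
  have "m \<in> set L"
    using L(2) root by simp
  then have "h \<le> m"
    using L(1) h by auto
  have "m \<le> h"
    using L(2) h least by auto
  have "proots (char_poly A) = proots [:0, 1:] + proots r"
    unfolding fac using r by (intro proots_mult) auto
  also have "proots [:0, 1:] = {#0 :: real#}"
    using proots_linear_factor[of "0 :: real"] by simp
  finally have "proots (char_poly A) = add_mset 0 (proots r)"
    by simp
  moreover have "insort 0 L = 0 # L"
    using L(2) m least by (intro insort_is_Cons) (auto intro: order_trans)
  ultimately show ?thesis
    using \<open>h \<le> m\<close> \<open>m \<le> h\<close> m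
    by (simp add: second_smallest_eig_def sorted_eigs_def L_def[symmetric] h)
qed

lemma laplacian_second_smallest_eig:
  assumes G: "simple_graph n E" and n: "n \<ge> 2"
  obtains r where "char_poly (laplacian n E) = [:0, 1:] * r" and "r \<noteq> 0"
    and "poly r (second_smallest_eig (laplacian n E)) = 0"
    and "0 \<le> second_smallest_eig (laplacian n E)"
    and "\<And>x. poly r x = 0 \<Longrightarrow> second_smallest_eig (laplacian n E) \<le> x"
proof -
  let ?L = "laplacian n E"
  have "poly (char_poly ?L) 0 = 0"
    using laplacian_eigenvalue_0[OF _ G] n eigenvalue_root_char_poly[OF laplacian_carrier] by simp
  then obtain r where fac: "char_poly ?L = [:0, 1:] * r"
    by (metis dvdE minus_zero poly_eq_0_iff_dvd)
  have "degree (char_poly ?L) = n"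
    using degree_monic_char_poly[OF laplacian_carrier] by simp
  then have "r \<noteq> 0" and "degree r > 0"
    using n by (auto simp: fac split: if_splits)
  then obtain x where "poly r x = 0"
    using real_symmetric_char_poly_factor_has_root[OF laplacian_carrier transpose_laplacian[OF G] fac]
    by blast
  define m where "m = Min {x. poly r x = 0}"
  have roots: "finite {x. poly r x = 0}" "{x. poly r x = 0} \<noteq> {}"
    using \<open>r \<noteq> 0\<close> \<open>poly r x = 0\<close> by (auto simp: poly_roots_finite)
  have root: "poly r m = 0"
    using Min_in[OF roots] by (simp add: m_def)
  have least: "m \<le> y" if "poly r y = 0" for y
    using roots that by (simp add: m_def)
  have "eigenvalue ?L m"
    using root eigenvalue_root_char_poly[OF laplacian_carrier] by (simp add: fac)
  then have "0 \<le> m"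
    by (rule laplacian_eigenvalue_nonneg[OF G])
  then have "second_smallest_eig ?L = m"
    by (rule second_smallest_eig_eqI[OF fac \<open>r \<noteq> 0\<close> root _ least])
  then show ?thesis
    using that[OF fac \<open>r \<noteq> 0\<close>] root least \<open>0 \<le> m\<close> by simp
qed

lemma poly_eq_if_eq_off_point:
  fixes p q :: "'a :: {idom, ring_char_0} poly"
  assumes "\<And>x. x \<noteq> c \<Longrightarrow> poly p x = poly q x"
  shows "p = q"
proof (rule ccontr)
  assume "p \<noteq> q"
  then have "finite {x. poly (p - q) x = 0}"
    by (intro poly_roots_finite) simp
  moreover have "UNIV - {c} \<subseteq> {x. poly (p - q) x = 0}"
    using assms by auto
  ultimately show False
    using finite_subset infinite_UNIV_char_0 by (metis finite_Diff2 finite.emptyI finite_insert)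
qed

lemma second_smallest_eig_coupled_laplacians:
  assumes G1: "simple_graph n E1" and G2: "simple_graph n E2" and n: "n \<ge> 2" and p: "p \<ge> 0"
  defines "\<mu>1 \<equiv> second_smallest_eig (laplacian n E1)"
    and "\<mu>2 \<equiv> second_smallest_eig (laplacian n E2)"
  shows "second_smallest_eig (coupled_mat n (laplacian n E1) (laplacian n E2) p) =
    min (2 * real n * p) (min (\<mu>1 + p * real n) (\<mu>2 + p * real n))"
proof -
  define c where "c = p * real n"
  obtain r1 where fac1: "char_poly (laplacian n E1) = [:0, 1:] * r1" and "r1 \<noteq> 0"
    and root1: "poly r1 \<mu>1 = 0" and "0 \<le> \<mu>1" and least1: "\<And>x. poly r1 x = 0 \<Longrightarrow> \<mu>1 \<le> x"
    using laplacian_second_smallest_eig[OF G1 n] unfolding \<mu>1_def by metis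
  obtain r2 where fac2: "char_poly (laplacian n E2) = [:0, 1:] * r2" and "r2 \<noteq> 0"
    and root2: "poly r2 \<mu>2 = 0" and "0 \<le> \<mu>2" and least2: "\<And>x. poly r2 x = 0 \<Longrightarrow> \<mu>2 \<le> x"
    using laplacian_second_smallest_eig[OF G2 n] unfolding \<mu>2_def by metis
  define R where "R = [:- (2 * c), 1:] * pcompose r1 [:- c, 1:] * pcompose r2 [:- c, 1:]"
  have poly_R: "poly R x = (x - 2 * c) * poly r1 (x - c) * poly r2 (x - c)" for x
    unfolding R_def by (simp add: poly_pcompose algebra_simps)
  have "char_poly (coupled_mat n (laplacian n E1) (laplacian n E2) p) = [:0, 1:] * R"
  proof (rule poly_eq_if_eq_off_point)
    fix x :: real assume "x \<noteq> c"
    then have y: "x - c \<noteq> 0" by simp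
    have "(x - c)\<^sup>2 * poly (char_poly (coupled_mat n (laplacian n E1) (laplacian n E2) p)) x =
        (x - c)\<^sup>2 * (x * (x - 2 * c) * poly r1 (x - c) * poly r2 (x - c))"
      using char_poly_coupled_mat[OF laplacian_carrier laplacian_carrier laplacian_mult_ones_mat[OF G1]
          laplacian_mult_ones_mat[OF G2] ones_mat_mult_laplacian[OF G2] y, of p]
      by (simp add: c_def fac1 fac2 power2_eq_square algebra_simps)
    then show "poly (char_poly (coupled_mat n (laplacian n E1) (laplacian n E2) p)) x = poly ([:0, 1:] * R) x"
      using y by (simp add: poly_R mult.assoc)
  qed
  moreover have "R \<noteq> 0"
  proof -
    have "pcompose r1 [:- c, 1:] \<noteq> 0" "pcompose r2 [:- c, 1:] \<noteq> 0"
      using \<open>r1 \<noteq> 0\<close> \<open>r2 \<noteq> 0\<close> by (simp_all add: pcompose_eq_0_iff)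
    then show ?thesis
      unfolding R_def by (simp only: mult_eq_0_iff) simp
  qed
  moreover have "poly R (min (2 * c) (min (\<mu>1 + c) (\<mu>2 + c))) = 0"
    using root1 root2 by (auto simp: poly_R min_def)
  moreover have "min (2 * c) (min (\<mu>1 + c) (\<mu>2 + c)) \<le> x" if "poly R x = 0" for x
    using that least1[of "x - c"] least2[of "x - c"] by (auto simp: poly_R)
  moreover have "0 \<le> min (2 * c) (min (\<mu>1 + c) (\<mu>2 + c))"
    using \<open>0 \<le> \<mu>1\<close> \<open>0 \<le> \<mu>2\<close> p by (simp add: c_def)
  ultimately show ?thesis
    by (simp add: second_smallest_eig_eqI c_def mult.commute)
qed

theorem mainTheorem4:
  fixes n :: nat and E1 E2 :: "nat \<Rightarrow> nat \<Rightarrow> bool"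
  assumes "n \<ge> 2"
    and "simple_graph n E1" and "simple_graph n E2"
  shows "p_star n (laplacian n E1) (laplacian n E2)
       = min (second_smallest_eig (laplacian n E1) / real n)
             (second_smallest_eig (laplacian n E2) / real n)"
proof -
  define \<mu>1 where "\<mu>1 = second_smallest_eig (laplacian n E1)"
  define \<mu>2 where "\<mu>2 = second_smallest_eig (laplacian n E2)"
  define m where "m = min (\<mu>1 / real n) (\<mu>2 / real n)"
  have n: "real n > 0"
    using assms(1) by simp
  have "0 \<le> \<mu>1" "0 \<le> \<mu>2"
    unfolding \<mu>1_def \<mu>2_def using laplacian_second_smallest_eig assms by metis+
  then have "0 \<le> m"
    by (simp add: m_def)
  have "second_smallest_eig (coupled_mat n (laplacian n E1) (laplacian n E2) p) = 2 * real n * p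
      \<longleftrightarrow> p \<le> m" if "p > 0" for p
    using second_smallest_eig_coupled_laplacians[OF assms(2,3,1), of p] that n
    by (auto simp: m_def \<mu>1_def[symmetric] \<mu>2_def[symmetric] min_def field_simps)
  then have "{0} \<union> {p. p > 0 \<and> second_smallest_eig (coupled_mat n (laplacian n E1) (laplacian n E2) p)
      = 2 * real n * p} = {0} \<union> {p. 0 < p \<and> p \<le> m}"
    by auto
  moreover have "Sup ({0} \<union> {p. 0 < p \<and> p \<le> m}) = m"
    using \<open>0 \<le> m\<close> by (intro cSup_eq_maximum) auto
  ultimately show ?thesis
    by (simp add: p_star_def m_def \<mu>1_def \<mu>2_def)
qed

end
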